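(* Let $m\ge2$ and let $f$ be the two-digit base-$m$ Kaprekar map on $X=\{0,\dots,m^2-1\}$. There exists a fixed set $K(x)$ with $|K(x)|=2$ if and only if $5\mid m+1$. In that case such a fixed set is unique.
   Context: For an integer $m\ge2$, $X=\{0,1,\dots,m^2-1\}$, each element written with exactly two base-$m$ digits (leading zeros allowed); $f(x)=D(x)-A(x)$ where $D(x)$ (resp. $A(x)$) has the digits of $x$ in nonincreasing (resp. nondecreasing) order. The step $S(x)$ is the least $s\ge0$ such that $f^{s+t}(x)=f^s(x)$ for some $t\ge1$; $T(x)$ is the least $t\ge1$ with $f^{S(x)+t}(x)=f^{S(x)}(x)$; the fixed set of $x$ is $K(x)=\{f^{S(x)+i}(x):0\le i<T(x)\}$. *)

theory Defs
  imports Main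
begin

definition kapD :: "nat \<Rightarrow> nat \<Rightarrow> nat" where
  "kapD m x = max (x div m) (x mod m) * m + min (x div m) (x mod m)"

definition kapA :: "nat \<Rightarrow> nat \<Rightarrow> nat" where
  "kapA m x = min (x div m) (x mod m) * m + max (x div m) (x mod m)"

definition kap :: "nat \<Rightarrow> nat \<Rightarrow> nat" where
  "kap m x = kapD m x - kapA m x"

definition kstep :: "nat \<Rightarrow> nat \<Rightarrow> nat" where
  "kstep m x = (LEAST s. \<exists>t\<ge>1. (kap m ^^ (s + t)) x = (kap m ^^ s) x)"

definition kperiod :: "nat \<Rightarrow> nat \<Rightarrow> nat" where
  "kperiod m x = (LEAST t. t \<ge> 1 \<and> (kap m ^^ (kstep m x + t)) x = (kap m ^^ kstep m x) x)"

definition fixedset :: "nat \<Rightarrow> nat \<Rightarrow> nat set" where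
  "fixedset m x = {(kap m ^^ (kstep m x + i)) x | i. i < kperiod m x}"

end

theory Submission
  imports Defs
begin

text \<open>Writing \<open>x = a m + b\<close>, one has \<open>f(x) = |a - b| (m - 1)\<close>. So after one step every orbit
  lives on the multiples \<open>e (m - 1)\<close> with \<open>0 \<le> e \<le> m - 1\<close>, and on them \<open>f\<close> acts as
  \<open>e \<mapsto> |m + 1 - 2 e|\<close> (for \<open>e \<ge> 1\<close>). A 2-cycle \<open>e\<^sub>1 \<noteq> e\<^sub>2\<close> of this reflection forces one
  of the two signs to be positive and the other negative, which gives \<open>5 e\<^sub>2 = m + 1\<close> and
  \<open>e\<^sub>1 = 3 e\<^sub>2\<close> up to symmetry. Conversely, for \<open>5 k = m + 1\<close> the points \<open>k (m - 1)\<close> and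
  \<open>3 k (m - 1)\<close> form a 2-cycle. Finally, the fixed set of \<open>x\<close> is the cycle its orbit falls into,
  whose cardinality is the period.\<close>

definition eventually_periodic :: "('a \<Rightarrow> 'a) \<Rightarrow> 'a \<Rightarrow> bool" where
  "eventually_periodic f x \<longleftrightarrow> (\<exists>s t. t \<ge> 1 \<and> (f ^^ (s + t)) x = (f ^^ s) x)"

definition preperiod :: "('a \<Rightarrow> 'a) \<Rightarrow> 'a \<Rightarrow> nat" where
  "preperiod f x = (LEAST s. \<exists>t\<ge>1. (f ^^ (s + t)) x = (f ^^ s) x)"

definition period :: "('a \<Rightarrow> 'a) \<Rightarrow> 'a \<Rightarrow> nat" where
  "period f x = (LEAST t. t \<ge> 1 \<and> (f ^^ (preperiod f x + t)) x = (f ^^ preperiod f x) x)"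

definition limit_cycle :: "('a \<Rightarrow> 'a) \<Rightarrow> 'a \<Rightarrow> 'a set" where
  "limit_cycle f x = (\<lambda>i. (f ^^ i) ((f ^^ preperiod f x) x)) ` {..<period f x}"

lemma funpow_add_apply: "(f ^^ (s + t)) x = (f ^^ t) ((f ^^ s) x)"
  by (simp only: add.commute[of s t] funpow_add comp_apply)

lemma eventually_periodic_if_orbit_finite:
  assumes "finite A" and "\<And>i. (f ^^ i) x \<in> A"
  shows "eventually_periodic f x"
proof -
  have "\<not> inj_on (\<lambda>i. (f ^^ i) x) {0..card A}"
  proof
    assume "inj_on (\<lambda>i. (f ^^ i) x) {0..card A}"
    moreover have "(\<lambda>i. (f ^^ i) x) ` {0..card A} \<subseteq> A"
      using assms(2) by blast
    ultimately have "card {0..card A} \<le> card A"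
      using card_inj_on_le assms(1) by blast
    then show False by simp
  qed
  then obtain i j where "i < j" "(f ^^ i) x = (f ^^ j) x"
    unfolding inj_on_def by (metis linorder_neqE_nat)
  then show ?thesis
    unfolding eventually_periodic_def by (intro exI[of _ i] exI[of _ "j - i"]) auto
qed

lemma period_least:
  assumes "eventually_periodic f x"
  defines "y \<equiv> (f ^^ preperiod f x) x"
  shows "period f x \<ge> 1" and "(f ^^ period f x) y = y"
    and "\<And>t. 1 \<le> t \<Longrightarrow> t < period f x \<Longrightarrow> (f ^^ t) y \<noteq> y"
proof -
  have "\<exists>t\<ge>1. (f ^^ (preperiod f x + t)) x = (f ^^ preperiod f x) x"
    using assms(1) unfolding eventually_periodic_def preperiod_def by (rule LeastI_ex)
  then have "period f x \<ge> 1 \<and> (f ^^ (preperiod f x + period f x)) x = y"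
    unfolding period_def y_def by (rule LeastI_ex)
  then show "period f x \<ge> 1" and "(f ^^ period f x) y = y"
    by (simp_all add: funpow_add_apply y_def)
  show "(f ^^ t) y \<noteq> y" if "1 \<le> t" "t < period f x" for t
    using not_less_Least[of t] that
    unfolding period_def y_def funpow_add_apply by blast
qed

lemma card_cycle:
  assumes "(f ^^ T) y = y" and "\<And>t. 1 \<le> t \<Longrightarrow> t < T \<Longrightarrow> (f ^^ t) y \<noteq> y"
  shows "card ((\<lambda>i. (f ^^ i) y) ` {..<T}) = T"
proof -
  have no_repeat: "(f ^^ i) y \<noteq> (f ^^ j) y" if "i < j" "j < T" for i j
  proof
    assume "(f ^^ i) y = (f ^^ j) y"
    then have "(f ^^ (i + (T - j))) y = (f ^^ (j + (T - j))) y"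
      by (simp only: funpow_add_apply)
    also have "\<dots> = y"
      using that assms(1) by simp
    finally have "(f ^^ (i + (T - j))) y = y" .
    moreover have "1 \<le> i + (T - j)" and "i + (T - j) < T"
      using that by linarith+
    ultimately show False
      using assms(2) by blast
  qed
  have "inj_on (\<lambda>i. (f ^^ i) y) {..<T}"
    by (rule inj_onI) (metis lessThan_iff linorder_neqE_nat no_repeat)
  then show ?thesis
    by (simp add: card_image)
qed

lemma card_limit_cycle:
  assumes "eventually_periodic f x"
  shows "card (limit_cycle f x) = period f x"
  unfolding limit_cycle_def using period_least[OF assms] by (intro card_cycle) auto

lemma limit_cycle_card_2:
  assumes "eventually_periodic f x" and "card (limit_cycle f x) = 2"
  obtains i where "limit_cycle f x = {(f ^^ i) x, f ((f ^^ i) x)}"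
    and "f (f ((f ^^ i) x)) = (f ^^ i) x" and "f ((f ^^ i) x) \<noteq> (f ^^ i) x"
proof -
  define y where "y = (f ^^ preperiod f x) x"
  have T: "period f x = 2"
    using assms card_limit_cycle by metis
  have "{..<2::nat} = {0, 1}" by auto
  then have "limit_cycle f x = {y, f y}"
    unfolding limit_cycle_def T y_def by simp
  moreover have "f (f y) = y"
    using period_least(2)[OF assms(1)] T unfolding y_def by (simp add: numeral_2_eq_2)
  moreover have "f y \<noteq> y"
    using period_least(3)[OF assms(1), of 1] T unfolding y_def by simp
  ultimately show thesis
    using that unfolding y_def by blast
qed

lemma limit_cycle_of_2_cycle:
  assumes "f (f x) = x" and "f x \<noteq> x"
  shows "limit_cycle f x = {x, f x}"
proof -
  have "(f ^^ (0 + 2)) x = (f ^^ 0) x"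
    using assms(1) by (simp add: numeral_2_eq_2)
  then have S: "preperiod f x = 0"
    unfolding preperiod_def by (intro Least_eq_0) (metis one_le_numeral)
  have T: "period f x = 2"
    unfolding period_def S
  proof (rule Least_equality)
    show "2 \<ge> (1::nat) \<and> (f ^^ (0 + 2)) x = (f ^^ 0) x"
      using assms(1) by (simp add: numeral_2_eq_2)
    show "2 \<le> t" if "t \<ge> 1 \<and> (f ^^ (0 + t)) x = (f ^^ 0) x" for t
      using that assms(2) by (cases "t = 1") auto
  qed
  have "{..<2::nat} = {0, 1}" by auto
  then show ?thesis
    unfolding limit_cycle_def S T by simp
qed

lemma fixedset_eq_limit_cycle: "fixedset m x = limit_cycle (kap m) x"
proof -
  have "kstep m x = preperiod (kap m) x" and "kperiod m x = period (kap m) x"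
    unfolding kstep_def kperiod_def preperiod_def period_def by simp_all
  then show ?thesis
    unfolding fixedset_def limit_cycle_def funpow_add_apply
    by (simp add: setcompr_eq_image lessThan_def)
qed

lemma kap_eq_digit_difference:
  "kap m z = (max (z div m) (z mod m) - min (z div m) (z mod m)) * (m - 1)"
proof -
  define a where "a = max (z div m) (z mod m)"
  define b where "b = min (z div m) (z mod m)"
  have "b \<le> a"
    unfolding a_def b_def by simp
  then obtain d where d: "a = b + d"
    using le_Suc_ex by blast
  have "kap m z = a * m + b - (b * m + a)"
    unfolding kap_def kapD_def kapA_def a_def b_def by simp
  also have "\<dots> = d * m - d"
    using d by (simp add: algebra_simps)
  finally show ?thesis
    using d unfolding a_def[symmetric] b_def[symmetric] by (simp add: diff_mult_distrib2)
qed

lemma kap_eq_mult: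
  assumes "z < m\<^sup>2"
  obtains e where "e \<le> m - 1" and "kap m z = e * (m - 1)"
proof -
  have "m > 0"
    using assms by (cases m) auto
  then have "z div m < m" and "z mod m < m"
    using assms by (simp_all add: div_less_iff_less_mult power2_eq_square)
  then have "max (z div m) (z mod m) - min (z div m) (z mod m) \<le> m - 1"
    by linarith
  then show thesis
    using that kap_eq_digit_difference by blast
qed

lemma mult_m_minus_1_less_square:
  fixes e m :: nat
  assumes "e \<le> m - 1" and "0 < m"
  shows "e * (m - 1) < m\<^sup>2"
proof -
  have "e * (m - 1) \<le> (m - 1) * (m - 1)"
    using assms(1) by simp
  also have "\<dots> < m * m"
    using assms(2) by (simp add: mult_strict_mono)
  finally show ?thesis
    by (simp add: power2_eq_square)
qed

lemma kap_less:
  assumes "z < m\<^sup>2"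
  shows "kap m z < m\<^sup>2"
proof -
  obtain e where "e \<le> m - 1" "kap m z = e * (m - 1)"
    using kap_eq_mult[OF assms] .
  moreover have "0 < m"
    using assms by (cases m) auto
  ultimately show ?thesis
    using mult_m_minus_1_less_square by simp
qed

lemma kap_funpow_less: "x < m\<^sup>2 \<Longrightarrow> (kap m ^^ i) x < m\<^sup>2"
  by (induction i) (auto simp: kap_less)

lemma eventually_periodic_kap: "x < m\<^sup>2 \<Longrightarrow> eventually_periodic (kap m) x"
  by (rule eventually_periodic_if_orbit_finite[of "{..<m\<^sup>2}"]) (auto simp: kap_funpow_less)

lemma kap_zero: "kap m 0 = 0"
  unfolding kap_def kapD_def kapA_def by simp

lemma kap_mult_m_minus_1:
  assumes "1 \<le> e" and "e \<le> m - 1"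
  shows "kap m (e * (m - 1)) = nat \<bar>int m + 1 - 2 * int e\<bar> * (m - 1)"
proof -
  have digits: "e * (m - 1) = (e - 1) * m + (m - e)"
    using assms by (cases e) (auto simp: algebra_simps)
  have "m - e < m"
    using assms by simp
  then have "e * (m - 1) div m = e - 1" and "e * (m - 1) mod m = m - e"
    unfolding digits by simp_all
  moreover have "max (e - 1) (m - e) - min (e - 1) (m - e) = nat \<bar>int m + 1 - 2 * int e\<bar>"
    using assms by linarith
  ultimately show ?thesis
    by (simp add: kap_eq_digit_difference)
qed

lemma reflection_2_cycle:
  fixes n e\<^sub>1 e\<^sub>2 :: nat
  assumes "e\<^sub>1 = nat \<bar>int n - 2 * int e\<^sub>2\<bar>" and "e\<^sub>2 = nat \<bar>int n - 2 * int e\<^sub>1\<bar>" and "e\<^sub>1 \<noteq> e\<^sub>2"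
  shows "(5 * e\<^sub>2 = n \<and> e\<^sub>1 = 3 * e\<^sub>2) \<or> (5 * e\<^sub>1 = n \<and> e\<^sub>2 = 3 * e\<^sub>1)"
  using assms by linarith

lemma kap_2_cycle_cases:
  assumes "y < m\<^sup>2" and "kap m (kap m y) = y" and "kap m y \<noteq> y"
  obtains k where "5 * k = m + 1" and "{y, kap m y} = {k * (m - 1), 3 * k * (m - 1)}"
proof -
  obtain e\<^sub>1 where e\<^sub>1: "e\<^sub>1 \<le> m - 1" "kap m y = e\<^sub>1 * (m - 1)"
    using kap_eq_mult[OF assms(1)] .
  obtain e\<^sub>2 where e\<^sub>2: "e\<^sub>2 \<le> m - 1" "y = e\<^sub>2 * (m - 1)"
    using kap_eq_mult[OF kap_less[OF assms(1)]] assms(2) by metis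
  have "e\<^sub>1 \<ge> 1" and "e\<^sub>2 \<ge> 1"
    using assms(2,3) e\<^sub>1 e\<^sub>2 kap_zero by (metis less_one mult_0 not_le)+
  have "m - 1 > 0"
    using assms(3) e\<^sub>1 e\<^sub>2 by (metis mult_0_right neq0_conv)
  then have "e\<^sub>1 = nat \<bar>int m + 1 - 2 * int e\<^sub>2\<bar>" and "e\<^sub>2 = nat \<bar>int m + 1 - 2 * int e\<^sub>1\<bar>"
    using kap_mult_m_minus_1[OF \<open>e\<^sub>2 \<ge> 1\<close> e\<^sub>2(1)] kap_mult_m_minus_1[OF \<open>e\<^sub>1 \<ge> 1\<close> e\<^sub>1(1)]
      assms(2) e\<^sub>1 e\<^sub>2 by auto
  moreover have "e\<^sub>1 \<noteq> e\<^sub>2"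
    using assms(3) e\<^sub>1 e\<^sub>2 by auto
  ultimately have "(5 * e\<^sub>2 = m + 1 \<and> e\<^sub>1 = 3 * e\<^sub>2) \<or> (5 * e\<^sub>1 = m + 1 \<and> e\<^sub>2 = 3 * e\<^sub>1)"
    using reflection_2_cycle[of e\<^sub>1 "m + 1" e\<^sub>2] unfolding of_nat_add of_nat_1 by blast
  then show thesis
  proof
    assume "5 * e\<^sub>2 = m + 1 \<and> e\<^sub>1 = 3 * e\<^sub>2"
    then show thesis
      using that[of e\<^sub>2] e\<^sub>1 e\<^sub>2 by simp
  next
    assume "5 * e\<^sub>1 = m + 1 \<and> e\<^sub>2 = 3 * e\<^sub>1"
    then show thesis
      using that[of e\<^sub>1] e\<^sub>1 e\<^sub>2 by (simp add: insert_commute)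
  qed
qed

lemma kap_2_cycle:
  assumes "5 * k = m + 1"
  shows "kap m (k * (m - 1)) = 3 * k * (m - 1)" and "kap m (3 * k * (m - 1)) = k * (m - 1)"
    and "3 * k * (m - 1) \<noteq> k * (m - 1)"
proof -
  have "1 \<le> k" and "3 * k \<le> m - 1" and "m - 1 > 0"
    using assms by arith+
  moreover have "nat \<bar>int m + 1 - 2 * int k\<bar> = 3 * k" and "nat \<bar>int m + 1 - 2 * int (3 * k)\<bar> = k"
    using assms by linarith+
  ultimately show "kap m (k * (m - 1)) = 3 * k * (m - 1)" and "kap m (3 * k * (m - 1)) = k * (m - 1)"
    and "3 * k * (m - 1) \<noteq> k * (m - 1)"
    using kap_mult_m_minus_1[of k m] kap_mult_m_minus_1[of "3 * k" m] by simp_all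
qed

lemma card_fixedset_eq_2_imp:
  assumes "x < m\<^sup>2" and "card (fixedset m x) = 2"
  obtains k where "5 * k = m + 1" and "fixedset m x = {k * (m - 1), 3 * k * (m - 1)}"
proof -
  obtain i where i: "fixedset m x = {(kap m ^^ i) x, kap m ((kap m ^^ i) x)}"
      "kap m (kap m ((kap m ^^ i) x)) = (kap m ^^ i) x" "kap m ((kap m ^^ i) x) \<noteq> (kap m ^^ i) x"
    using limit_cycle_card_2[OF eventually_periodic_kap[OF assms(1)]] assms(2)
    unfolding fixedset_eq_limit_cycle by metis
  show thesis
    using kap_2_cycle_cases[OF kap_funpow_less[OF assms(1)] i(2,3)] that i(1) by metis
qed

lemma fixedset_2_cycle:
  assumes "5 * k = m + 1"
  shows "k * (m - 1) < m\<^sup>2" and "fixedset m (k * (m - 1)) = {k * (m - 1), 3 * k * (m - 1)}"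
proof -
  have "k \<le> m - 1" and "0 < m"
    using assms by arith+
  then show "k * (m - 1) < m\<^sup>2"
    by (rule mult_m_minus_1_less_square)
  show "fixedset m (k * (m - 1)) = {k * (m - 1), 3 * k * (m - 1)}"
    unfolding fixedset_eq_limit_cycle
    using limit_cycle_of_2_cycle kap_2_cycle[OF assms] by metis
qed

theorem lemma3p3p4:
  fixes m :: nat
  assumes "m \<ge> 2"
  shows "((\<exists>x < m^2. card (fixedset m x) = 2) \<longleftrightarrow> 5 dvd (m + 1))
    \<and> (5 dvd (m + 1) \<longrightarrow> (\<exists>!K. \<exists>x < m^2. K = fixedset m x \<and> card K = 2))"
proof -
  have card_2: "card {k * (m - 1), 3 * k * (m - 1)} = 2" if "5 * k = m + 1" for k
    using kap_2_cycle(3)[OF that] by simp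
  have "5 dvd (m + 1)" if "x < m\<^sup>2" "card (fixedset m x) = 2" for x
    using card_fixedset_eq_2_imp[OF that] by (metis dvd_triv_left)
  moreover have "\<exists>!K. \<exists>x < m\<^sup>2. K = fixedset m x \<and> card K = 2" if k: "5 * k = m + 1" for k
  proof (rule ex1I[of _ "{k * (m - 1), 3 * k * (m - 1)}"])
    show "\<exists>x < m\<^sup>2. {k * (m - 1), 3 * k * (m - 1)} = fixedset m x \<and> card {k * (m - 1), 3 * k * (m - 1)} = 2"
      using fixedset_2_cycle[OF k] card_2[OF k] by metis
    show "K = {k * (m - 1), 3 * k * (m - 1)}" if "\<exists>x < m\<^sup>2. K = fixedset m x \<and> card K = 2" for K
      using that card_fixedset_eq_2_imp k by (metis mult_left_cancel zero_neq_numeral)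
  qed
  ultimately show ?thesis
    by (metis dvd_def)
qed

end
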